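(* Consider the closed-loop system $$\dot X(t)=f\big(X(t),u(0,t)\big),\quad u_t(x,t)=v\big(u(x,t)\big)u_x(x,t),\quad u(1,t)=\kappa\big(p(1,t)\big),$$ with $p(x,t)=X(t)+\int_0^x f(p(y,t),u(y,t))\Gamma(u(y,t),u_y(y,t),y)\,dy$, $\Gamma(u,u_x,x)=\frac{1}{v(u)}-\frac{x v'(u)u_x}{v(u)^2}$, under Assumptions (A1)–(A3) below, and let $M>0$ be fixed. Define $w(x,t)=u(x,t)-\kappa(p(x,t))$. There exists a class $\mathcal{KL}$ function $\beta_w$ such that for all solutions of the closed-loop system satisfying the feasibility condition $$-M<\frac{v'\big(u(x,t)\big)u_x(x,t)}{v\big(u(x,t)\big)}<1\quad\text{for all }x\in[0,1],\ t\ge0,$$ the following holds: $$\Omega_w(t)\le\beta_w\big(\Omega_w(0),t\big)\ \text{for all }t\ge0,\qquad \Omega_w(t)=|X(t)|+\|w(t)\|_\infty+\|w_x(t)\|_\infty.$$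
   Context: $X(t)\in\mathbb{R}^n$, $u(x,t)\in\mathbb{R}$, $x\in[0,1]$, $t\ge0$; $f:\mathbb{R}^n\times\mathbb{R}\to\mathbb{R}^n$ is continuously differentiable with $f(0,0)=0$. (A1) $v:\mathbb{R}\to\mathbb{R}_+$ is twice continuously differentiable and $v(u)\ge\underline v>0$ for all $u$. (A2) $\dot X=f(X,\omega)$ is strongly forward complete w.r.t. $\omega$: there exist smooth $R:\mathbb{R}^n\to\mathbb{R}_+$ and class $\mathcal{K}_\infty$ functions $\alpha_1,\alpha_2,\alpha_3$ with $\alpha_1(|X|)\le R(X)\le\alpha_2(|X|)$, $\frac{\partial R}{\partial X}f(X,\omega)\le R(X)+\alpha_3(|\omega|)$. (A3) $\kappa:\mathbb{R}^n\to\mathbb{R}$ is twice continuously differentiable, $\kappa(0)=0$, and $\dot X=f(X,\kappa(X)+\omega)$ is input-to-state stable w.r.t. $\omega$. Solutions are continuously differentiable functions $X$, $u$ satisfying the closed-loop equations. $\|w(t)\|_\infty=\max_{x\in[0,1]}|w(x,t)|$, similarly for $w_x$; $|\cdot|$ is the Euclidean norm. *)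

theory Defs
  imports "HOL-Analysis.Analysis"
begin

definition class_K :: "(real \<Rightarrow> real) \<Rightarrow> bool" where
  "class_K \<alpha> \<longleftrightarrow> continuous_on {0..} \<alpha> \<and> \<alpha> 0 = 0 \<and> strict_mono_on {0..} \<alpha>"

definition class_Kinf :: "(real \<Rightarrow> real) \<Rightarrow> bool" where
  "class_Kinf \<alpha> \<longleftrightarrow> class_K \<alpha> \<and> filterlim \<alpha> at_top at_top"

definition class_KL :: "(real \<Rightarrow> real \<Rightarrow> real) \<Rightarrow> bool" where
  "class_KL \<beta> \<longleftrightarrow>
     continuous_on ({0..} \<times> {0..}) (\<lambda>(s,t). \<beta> s t) \<and>
     (\<forall>t\<ge>0. class_K (\<lambda>s. \<beta> s t)) \<and>
     (\<forall>s\<ge>0. (\<forall>t1 t2. 0 \<le> t1 \<longrightarrow> t1 \<le> t2 \<longrightarrow> \<beta> s t2 \<le> \<beta> s t1) \<and>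
             ((\<lambda>t. \<beta> s t) \<longlongrightarrow> 0) at_top)"

definition C1_fun2 :: "('a::real_normed_vector \<Rightarrow> 'b::real_normed_vector \<Rightarrow> 'c::real_normed_vector) \<Rightarrow> bool" where
  "C1_fun2 g \<longleftrightarrow> (\<exists>D :: 'a \<times> 'b \<Rightarrow> ('a \<times> 'b) \<Rightarrow>\<^sub>L 'c.
      continuous_on UNIV D \<and> (\<forall>z. ((\<lambda>(a,b). g a b) has_derivative blinfun_apply (D z)) (at z)))"

definition C1_fun :: "('a::real_normed_vector \<Rightarrow> 'c::real_normed_vector) \<Rightarrow> bool" where
  "C1_fun g \<longleftrightarrow> (\<exists>D :: 'a \<Rightarrow> 'a \<Rightarrow>\<^sub>L 'c.
      continuous_on UNIV D \<and> (\<forall>z. (g has_derivative blinfun_apply (D z)) (at z)))"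

definition C2_fun :: "('a::real_normed_vector \<Rightarrow> 'c::real_normed_vector) \<Rightarrow> bool" where
  "C2_fun g \<longleftrightarrow> (\<exists>(D :: 'a \<Rightarrow> 'a \<Rightarrow>\<^sub>L 'c) (D2 :: 'a \<Rightarrow> 'a \<Rightarrow>\<^sub>L ('a \<Rightarrow>\<^sub>L 'c)).
      continuous_on UNIV D2 \<and> (\<forall>z. (g has_derivative blinfun_apply (D z)) (at z)) \<and>
      (\<forall>z. (D has_derivative blinfun_apply (D2 z)) (at z)))"

definition C2_real :: "(real \<Rightarrow> real) \<Rightarrow> bool" where
  "C2_real g \<longleftrightarrow> (\<forall>s. g differentiable at s) \<and> (\<forall>s. deriv g differentiable at s) \<and>
      continuous_on UNIV (deriv (deriv g))"

definition C1_on2 :: "(real \<Rightarrow> real \<Rightarrow> real) \<Rightarrow> (real \<times> real) set \<Rightarrow> bool" where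
  "C1_on2 u S \<longleftrightarrow> (\<exists>D :: real \<times> real \<Rightarrow> (real \<times> real) \<Rightarrow>\<^sub>L real.
      continuous_on S D \<and> (\<forall>z\<in>S. ((\<lambda>(x,t). u x t) has_derivative blinfun_apply (D z)) (at z within S)))"

definition px :: "(real \<Rightarrow> real \<Rightarrow> 'a::real_normed_vector) \<Rightarrow> real \<Rightarrow> real \<Rightarrow> 'a" where
  "px u x t = vector_derivative (\<lambda>y. u y t) (at x within {0..1})"

definition pt :: "(real \<Rightarrow> real \<Rightarrow> 'a::real_normed_vector) \<Rightarrow> real \<Rightarrow> real \<Rightarrow> 'a" where
  "pt u x t = vector_derivative (\<lambda>s. u x s) (at t within {0..})"

definition ISS :: "(real^'n \<Rightarrow> real \<Rightarrow> real^'n) \<Rightarrow> bool" where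
  "ISS F \<longleftrightarrow> (\<exists>\<beta> \<gamma>. class_KL \<beta> \<and> class_K \<gamma> \<and>
     (\<forall>(X :: real \<Rightarrow> real^'n) (\<omega> :: real \<Rightarrow> real).
        continuous_on {0..} \<omega> \<longrightarrow>
        (\<forall>t\<ge>0. (X has_vector_derivative F (X t) (\<omega> t)) (at t within {0..})) \<longrightarrow>
        (\<forall>t\<ge>0. norm (X t) \<le> \<beta> (norm (X 0)) t + \<gamma> (SUP s\<in>{0..t}. \<bar>\<omega> s\<bar>))))"

definition Gam :: "(real \<Rightarrow> real) \<Rightarrow> real \<Rightarrow> real \<Rightarrow> real \<Rightarrow> real" where
  "Gam v u ux x = 1 / v u - x * deriv v u * ux / (v u)^2"

definition closed_loop_sol ::
  "(real^'n \<Rightarrow> real \<Rightarrow> real^'n) \<Rightarrow> (real \<Rightarrow> real) \<Rightarrow> (real^'n \<Rightarrow> real) \<Rightarrow>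
   (real \<Rightarrow> real^'n) \<Rightarrow> (real \<Rightarrow> real \<Rightarrow> real) \<Rightarrow> (real \<Rightarrow> real \<Rightarrow> real^'n) \<Rightarrow> bool" where
  "closed_loop_sol f v \<kappa> X u p \<longleftrightarrow>
     (\<forall>t\<ge>0. (X has_vector_derivative f (X t) (u 0 t)) (at t within {0..})) \<and>
     C1_on2 u ({0..1} \<times> {0..}) \<and>
     (\<forall>x\<in>{0..1}. \<forall>t\<ge>0. pt u x t = v (u x t) * px u x t) \<and>
     (\<forall>t\<ge>0. u 1 t = \<kappa> (p 1 t)) \<and>
     (\<forall>t\<ge>0. continuous_on {0..1} (\<lambda>x. p x t) \<and>
        (\<forall>x\<in>{0..1}. p x t = X t + integral {0..x}
            (\<lambda>y. Gam v (u y t) (px u y t) y *\<^sub>R f (p y t) (u y t))))"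

definition feasible :: "real \<Rightarrow> (real \<Rightarrow> real) \<Rightarrow> (real \<Rightarrow> real \<Rightarrow> real) \<Rightarrow> bool" where
  "feasible M v u \<longleftrightarrow> (\<forall>x\<in>{0..1}. \<forall>t\<ge>0.
      - M < deriv v (u x t) * px u x t / v (u x t) \<and> deriv v (u x t) * px u x t / v (u x t) < 1)"

definition wfun :: "(real^'n \<Rightarrow> real) \<Rightarrow> (real \<Rightarrow> real \<Rightarrow> real) \<Rightarrow> (real \<Rightarrow> real \<Rightarrow> real^'n) \<Rightarrow> real \<Rightarrow> real \<Rightarrow> real" where
  "wfun \<kappa> u p x t = u x t - \<kappa> (p x t)"

definition Omega_w :: "(real^'n \<Rightarrow> real) \<Rightarrow> (real \<Rightarrow> real^'n) \<Rightarrow> (real \<Rightarrow> real \<Rightarrow> real) \<Rightarrow>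
    (real \<Rightarrow> real \<Rightarrow> real^'n) \<Rightarrow> real \<Rightarrow> real" where
  "Omega_w \<kappa> X u p t = norm (X t) + (SUP x\<in>{0..1}. \<bar>wfun \<kappa> u p x t\<bar>)
      + (SUP x\<in>{0..1}. \<bar>px (wfun \<kappa> u p) x t\<bar>)"

end

theory Submission
  imports Defs
begin

text \<open>Along the characteristics \<open>dx/dt = -v(u)\<close> of the transport equation the solution \<open>u\<close> is
  constant, so the characteristics are straight lines; evaluating the integral equation for \<open>p\<close>
  along them identifies \<open>p(x,t)\<close> with the future state \<open>X(t + x / v(u(x,t)))\<close>. Consequently
  \<open>w = u - \<kappa>(p)\<close> is transported unchanged, \<open>w(x,t) = w(min (x + v t) 1, 0)\<close>, and the boundary
  condition makes \<open>w(1,\<cdot>) = 0\<close>. Since \<open>v \<ge> v\<^sub>l > 0\<close>, \<open>w\<close> and \<open>w\<^sub>x\<close> vanish identically after the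
  time \<open>T = 2/v\<^sub>l\<close>, while before \<open>T\<close> the feasibility condition bounds the stretching factor
  \<open>1 + t v'(u) u\<^sub>x\<close> of the characteristics by \<open>2 + M\<close>, so \<open>\<parallel>w\<^sub>x(t)\<parallel> \<le> (2 + M) \<parallel>w\<^sub>x(0)\<parallel>\<close>.
  Finally \<open>X\<close> obeys \<open>\<dot>X = f(X, \<kappa>(X) + w(0,t))\<close>, so ISS bounds \<open>X\<close> on \<open>[0,T]\<close> and makes it
  decay like an unforced ISS system afterwards.\<close>

section \<open>A Gronwall-type uniqueness lemma\<close>

lemma linearly_bounded_derivative_zero_right:
  fixes \<phi> :: "real \<Rightarrow> 'a::real_inner"
  assumes der: "\<And>s. s \<in> {a..b} \<Longrightarrow> (\<phi> has_vector_derivative \<phi>' s) (at s within {a..b})"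
    and bd: "\<And>s. s \<in> {a..b} \<Longrightarrow> norm (\<phi>' s) \<le> K * norm (\<phi> s)"
    and z: "\<phi> a = 0" and s: "s \<in> {a..b}"
  shows "\<phi> s = 0"
proof -
  \<comment> \<open>\<open>|\<phi>|\<^sup>2 e\<^sup>-\<^sup>2\<^sup>K\<^sup>s\<close> is nonincreasing and vanishes at \<open>a\<close>.\<close>
  define g where "g s = inner (\<phi> s) (\<phi> s) * exp (-(2*K) * s)" for s
  define g' where "g' s = (\<lambda>h. h * (2 * inner (\<phi> s) (\<phi>' s) * exp (-(2*K) * s)
      + inner (\<phi> s) (\<phi> s) * (exp (-(2*K) * s) * (-(2*K)))))" for s
  have gd: "(g has_derivative g' x) (at x within {a..s})" if "a \<le> x" "x \<le> s" for x
  proof -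
    have x: "x \<in> {a..b}" using that s by auto
    have d: "(\<phi> has_derivative (\<lambda>h. h *\<^sub>R \<phi>' x)) (at x within {a..s})"
      using has_vector_derivative_within_subset[OF der[OF x]] s
      unfolding has_vector_derivative_def by auto
    have e: "((\<lambda>s. exp (-(2*K) * s)) has_real_derivative (exp (-(2*K) * x) * (-(2*K)))) (at x within {a..s})"
      by (auto intro!: derivative_eq_intros)
    show ?thesis unfolding g_def g'_def
      by (rule has_derivative_eq_rhs,
          rule has_derivative_mult[OF has_derivative_inner[OF d d] e[unfolded has_field_derivative_def]])
        (auto simp: fun_eq_iff algebra_simps inner_commute)
  qed
  obtain x where x: "x \<in> {a..s}" and eq: "g s - g a = g' x (s - a)"
    using mvt_very_simple[of a s g g'] gd s by auto
  have "inner (\<phi> x) (\<phi>' x) \<le> norm (\<phi> x) * norm (\<phi>' x)"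
    using Cauchy_Schwarz_ineq2 by (metis abs_le_iff)
  also have "\<dots> \<le> norm (\<phi> x) * (K * norm (\<phi> x))"
    using bd x s by (simp add: mult_left_mono)
  finally have "inner (\<phi> x) (\<phi>' x) \<le> K * inner (\<phi> x) (\<phi> x)"
    by (simp add: power2_norm_eq_inner[symmetric] power2_eq_square algebra_simps)
  moreover have "g' x (s - a) = ((s - a) * (2 * exp (-(2*K) * x))) * (inner (\<phi> x) (\<phi>' x) - K * inner (\<phi> x) (\<phi> x))"
    unfolding g'_def by (simp add: algebra_simps)
  ultimately have "g' x (s - a) \<le> 0" using s
    by (metis diff_ge_0_iff_ge mult_nonneg_nonpos atLeastAtMost_iff exp_ge_zero mult_nonneg_nonneg
        zero_le_numeral diff_le_0_iff_le)
  then have "g s \<le> 0" using eq z unfolding g_def by simp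
  then have "inner (\<phi> s) (\<phi> s) \<le> 0" unfolding g_def by (simp add: mult_le_0_iff)
  then show ?thesis by (metis inner_gt_zero_iff not_le)
qed

lemma linearly_bounded_derivative_zero_unique:
  fixes \<phi> :: "real \<Rightarrow> 'a::real_inner"
  assumes der: "\<And>s. s \<in> {a..b} \<Longrightarrow> (\<phi> has_vector_derivative \<phi>' s) (at s within {a..b})"
    and bd: "\<And>s. s \<in> {a..b} \<Longrightarrow> norm (\<phi>' s) \<le> K * norm (\<phi> s)"
    and t0: "t0 \<in> {a..b}" "\<phi> t0 = 0" and s: "s \<in> {a..b}"
  shows "\<phi> s = 0"
proof (cases "t0 \<le> s")
  case True
  show ?thesis
  proof (rule linearly_bounded_derivative_zero_right[of t0 b \<phi> \<phi>' K])
    show "(\<phi> has_vector_derivative \<phi>' r) (at r within {t0..b})" if "r \<in> {t0..b}" for r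
      using der[of r] that t0 by (auto intro: has_vector_derivative_within_subset)
  qed (use bd t0 s True in auto)
next
  case False
  define \<psi> where "\<psi> r = \<phi> (- r)" for r
  have "\<psi> (- s) = 0"
  proof (rule linearly_bounded_derivative_zero_right[of "- t0" "- a" \<psi> "\<lambda>r. - \<phi>' (- r)" K])
    show "(\<psi> has_vector_derivative - \<phi>' (- r)) (at r within {- t0..- a})" if r: "r \<in> {- t0..- a}" for r
    proof -
      have "(uminus has_vector_derivative -1) (at r within {- t0..- a})"
        using has_vector_derivative_minus[OF has_vector_derivative_id] by (simp add: fun_Compl_def)
      moreover have "(\<phi> has_vector_derivative \<phi>' (- r)) (at (- r) within uminus ` {- t0..- a})"
        by (rule has_vector_derivative_within_subset[OF der]) (use r t0 in auto)
      ultimately show ?thesis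
        using vector_diff_chain_within unfolding \<psi>_def o_def by fastforce
    qed
  qed (use bd t0 s False \<psi>_def in auto)
  then show ?thesis unfolding \<psi>_def by simp
qed

lemma class_K_mono: "class_K g \<Longrightarrow> 0 \<le> s \<Longrightarrow> s \<le> s' \<Longrightarrow> g s \<le> g s'"
  unfolding class_K_def by (rule strict_mono_on_leD[of "{0..}"]) auto

lemma class_K_nonneg: "class_K g \<Longrightarrow> 0 \<le> s \<Longrightarrow> 0 \<le> g s"
  using class_K_mono[of g 0 s] unfolding class_K_def by simp

lemma class_KL_class_K: "class_KL \<beta> \<Longrightarrow> 0 \<le> t \<Longrightarrow> class_K (\<lambda>s. \<beta> s t)"
  unfolding class_KL_def by blast

lemma class_KL_nonneg: "class_KL \<beta> \<Longrightarrow> 0 \<le> s \<Longrightarrow> 0 \<le> t \<Longrightarrow> 0 \<le> \<beta> s t"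
  using class_K_nonneg[OF class_KL_class_K] by blast

lemma class_KL_antimono: "class_KL \<beta> \<Longrightarrow> 0 \<le> s \<Longrightarrow> 0 \<le> t1 \<Longrightarrow> t1 \<le> t2 \<Longrightarrow> \<beta> s t2 \<le> \<beta> s t1"
  unfolding class_KL_def by blast

lemma class_K_add:
  assumes g: "class_K g" and h: "class_K h" shows "class_K (\<lambda>r. g r + h r)"
proof -
  have "continuous_on {0..} (\<lambda>r. g r + h r)"
    using g h unfolding class_K_def by (intro continuous_on_add) auto
  moreover have "strict_mono_on {0..} (\<lambda>r. g r + h r)"
    using g h unfolding class_K_def strict_mono_on_def by (blast intro: add_strict_mono)
  ultimately show ?thesis using g h unfolding class_K_def by simp
qed

lemma class_K_linear: "0 < c \<Longrightarrow> class_K (\<lambda>r. c * r)"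
  unfolding class_K_def strict_mono_on_def by (auto intro!: continuous_intros)

lemma class_K_compose:
  assumes g: "class_K g" and h: "class_K h" shows "class_K (\<lambda>r. g (h r))"
proof -
  have h_nonneg: "h r \<in> {0..}" if "r \<in> {0..}" for r using class_K_nonneg[OF h] that by simp
  have "continuous_on {0..} (\<lambda>r. g (h r))"
    using continuous_on_compose2[of "{0..}" g "{0..}" h] g h h_nonneg unfolding class_K_def by blast
  moreover have "strict_mono_on {0..} (\<lambda>r. g (h r))"
  proof (rule strict_mono_onI)
    fix r s :: real assume "r \<in> {0..}" "s \<in> {0..}" "r < s"
    then show "g (h r) < g (h s)"
      using h_nonneg g h unfolding class_K_def strict_mono_on_def by blast
  qed
  ultimately show ?thesis using g h unfolding class_K_def by simp
qed

lemma class_KL_add: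
  assumes \<beta>: "class_KL \<beta>" and \<beta>': "class_KL \<beta>'" shows "class_KL (\<lambda>s t. \<beta> s t + \<beta>' s t)"
proof -
  have "continuous_on ({0..} \<times> {0..}) (\<lambda>z. (\<lambda>(s,t). \<beta> s t) z + (\<lambda>(s,t). \<beta>' s t) z)"
    using \<beta> \<beta>' unfolding class_KL_def by (intro continuous_on_add) auto
  moreover have "class_K (\<lambda>s. \<beta> s t + \<beta>' s t)" if "0 \<le> t" for t
    using class_K_add[OF class_KL_class_K[OF \<beta> that] class_KL_class_K[OF \<beta>' that]] .
  moreover have "\<beta> s t2 + \<beta>' s t2 \<le> \<beta> s t1 + \<beta>' s t1" if "0 \<le> s" "0 \<le> t1" "t1 \<le> t2" for s t1 t2
    using class_KL_antimono[OF \<beta> that] class_KL_antimono[OF \<beta>' that] by simp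
  moreover have "((\<lambda>t. \<beta> s t + \<beta>' s t) \<longlongrightarrow> 0) at_top" if "0 \<le> s" for s
    using \<beta> \<beta>' that unfolding class_KL_def by (intro tendsto_add_zero) auto
  ultimately show ?thesis unfolding class_KL_def by (simp add: case_prod_beta')
qed

lemma class_KL_delay:
  assumes \<beta>: "class_KL \<beta>" and B: "class_K B"
  shows "class_KL (\<lambda>r t. \<beta> (B r) (max (t - T) 0))"
proof -
  have "continuous_on ({0..} \<times> {0..}) (\<lambda>z. B (fst z))"
    by (rule continuous_on_compose2[OF conjunct1[OF B[unfolded class_K_def]]
          continuous_on_fst[OF continuous_on_id]]) auto
  then have inner: "continuous_on ({0..} \<times> {0..}) (\<lambda>z. (B (fst z), max (snd z - T) (0::real)))"
    by (rule continuous_on_Pair)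
      (intro continuous_on_max continuous_on_diff continuous_on_snd continuous_on_id continuous_on_const)
  have outer: "continuous_on ({0..} \<times> {0..}) (\<lambda>(s,t). \<beta> s t)"
    using \<beta> unfolding class_KL_def by simp
  have "(\<lambda>z. (B (fst z), max (snd z - T) 0)) ` ({0..} \<times> {0..}) \<subseteq> {0..} \<times> {0..}"
  proof (rule image_subsetI)
    fix z :: "real \<times> real" assume "z \<in> {0..} \<times> {0..}"
    then show "(B (fst z), max (snd z - T) 0) \<in> {0..} \<times> {0..}"
      using class_K_nonneg[OF B, of "fst z"] by (simp add: mem_Times_iff)
  qed
  from continuous_on_compose2[OF outer inner this]
  have "continuous_on ({0..} \<times> {0..}) (\<lambda>z. (\<lambda>(s,t). \<beta> s t) (B (fst z), max (snd z - T) 0))" .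
  moreover have "class_K (\<lambda>r. \<beta> (B r) (max (t - T) 0))" for t
    by (rule class_K_compose[OF class_KL_class_K[OF \<beta>] B]) simp
  moreover have "\<beta> (B s) (max (t2 - T) 0) \<le> \<beta> (B s) (max (t1 - T) 0)" if "0 \<le> s" "t1 \<le> t2" for s t1 t2
    using class_KL_antimono[OF \<beta> class_K_nonneg[OF B]] that by simp
  moreover have "((\<lambda>t. \<beta> (B s) (max (t - T) 0)) \<longlongrightarrow> 0) at_top" if "0 \<le> s" for s
  proof -
    have delay: "filterlim (\<lambda>t. max (t - T) 0) at_top at_top"
      unfolding filterlim_at_top
    proof
      fix Z :: real
      show "\<forall>\<^sub>F t in at_top. Z \<le> max (t - T) 0"
        using eventually_ge_at_top[of "Z + T"] by eventually_elim simp
    qed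
    have "((\<lambda>t. \<beta> (B s) t) \<longlongrightarrow> 0) at_top"
      using \<beta> class_K_nonneg[OF B that] unfolding class_KL_def by blast
    from filterlim_compose[OF this delay] show ?thesis .
  qed
  ultimately show ?thesis unfolding class_KL_def by (simp add: case_prod_beta)
qed

lemma class_KL_exp_decay:
  assumes C: "class_K C"
  shows "class_KL (\<lambda>r t. C r * exp (T - t))"
proof -
  have "continuous_on ({0..} \<times> {0..}) (\<lambda>z. C (fst z))"
    by (rule continuous_on_compose2[OF conjunct1[OF C[unfolded class_K_def]]
          continuous_on_fst[OF continuous_on_id]]) auto
  then have "continuous_on ({0..} \<times> {0..}) (\<lambda>z. C (fst z) * exp (T - snd z))"
    by (rule continuous_on_mult) (intro continuous_on_exp continuous_on_diff continuous_on_const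
        continuous_on_snd continuous_on_id)
  moreover have "class_K (\<lambda>r. C r * exp (T - t))" for t
    using class_K_compose[OF class_K_linear[of "exp (T - t)"] C] by (simp add: mult.commute)
  moreover have "((\<lambda>t. C s * exp (T - t)) \<longlongrightarrow> 0) at_top" for s
  proof -
    have "filterlim (\<lambda>t. T - t) at_bot at_top"
      by (simp add: filterlim_at_bot eventually_at_top_linorder) (metis diff_le_eq add.commute)
    then have "((\<lambda>t. exp (T - t)) \<longlongrightarrow> 0) at_top"
      using filterlim_compose[OF exp_at_bot] by blast
    then show ?thesis by (rule tendsto_mult_right_zero)
  qed
  ultimately show ?thesis
    using class_K_nonneg[OF C] unfolding class_KL_def by (auto simp: case_prod_beta intro!: mult_left_mono)
qed

lemma ISS_E:
  assumes "ISS F"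
  obtains \<beta> \<gamma> where "class_KL \<beta>" "class_K \<gamma>"
    "\<And>(Xs :: real \<Rightarrow> real^'n) \<omega> t. continuous_on {0..} \<omega> \<Longrightarrow>
       (\<And>t. t \<ge> 0 \<Longrightarrow> (Xs has_vector_derivative F (Xs t) (\<omega> t)) (at t within {0..})) \<Longrightarrow>
       t \<ge> 0 \<Longrightarrow> norm (Xs t) \<le> \<beta> (norm (Xs 0)) t + \<gamma> (SUP s\<in>{0..t}. \<bar>\<omega> s\<bar>)"
  using assms unfolding ISS_def by blast

lemma at_within_atLeast_nontrivial: "(t::real) \<ge> 0 \<Longrightarrow> at t within {0..} \<noteq> bot"
  using islimpt_subset[of t "{t..t+1}" "{0..}"] trivial_limit_within by auto

lemma at_within_Icc_nontrivial: "(x::real) \<in> {0..1} \<Longrightarrow> at x within {0..1} \<noteq> bot"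
  by (simp add: trivial_limit_within)

lemma continuous_on_compact_norm_bound:
  fixes g :: "'a::metric_space \<Rightarrow> 'b::real_normed_vector"
  assumes "continuous_on K g" "compact K"
  obtains B where "B \<ge> 0" "\<And>x. x \<in> K \<Longrightarrow> norm (g x) \<le> B"
proof -
  have "bounded (g ` K)" using compact_imp_bounded[OF compact_continuous_image[OF assms]] .
  then obtain B where "\<forall>y\<in>g ` K. norm y \<le> B" using bounded_iff by blast
  then show ?thesis using that[of "max B 0"] by force
qed

lemma bdd_above_abs_continuous_on_Icc:
  assumes "continuous_on {a..b} (g :: real \<Rightarrow> real)"
  shows "bdd_above ((\<lambda>x. \<bar>g x\<bar>) ` {a..b})"
proof -
  obtain B where "\<And>x. x \<in> {a..b} \<Longrightarrow> norm (g x) \<le> B"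
    using continuous_on_compact_norm_bound[OF assms] by blast
  then show ?thesis by (intro bdd_aboveI2) simp
qed

lemma blinfun_apply_real_pair:
  "blinfun_apply D (a::real, b::real) = a * blinfun_apply D (1,0) + b * blinfun_apply D (0,1)"
proof -
  have "(a,b) = a *\<^sub>R (1::real,0::real) + b *\<^sub>R (0,1)" by simp
  then show ?thesis by (metis blinfun.add_right blinfun.scaleR_right real_scaleR_def)
qed

lemma continuous_deriv_imp_lipschitz_on_interval:
  fixes g :: "real \<Rightarrow> real"
  assumes "\<And>s. (g has_real_derivative deriv g s) (at s)" "continuous_on UNIV (deriv g)"
  obtains L where "L \<ge> 0" "\<And>y z. \<bar>y\<bar> \<le> H \<Longrightarrow> \<bar>z\<bar> \<le> H \<Longrightarrow> \<bar>g y - g z\<bar> \<le> L * \<bar>y - z\<bar>"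
proof -
  obtain L where L: "L \<ge> 0" "\<And>s. s \<in> {-H..H} \<Longrightarrow> norm (deriv g s) \<le> L"
    using continuous_on_compact_norm_bound[of "{-H..H}" "deriv g"] continuous_on_subset[OF assms(2)]
    by blast
  have "norm (g y - g z) \<le> L * norm (y - z)" if "\<bar>y\<bar> \<le> H" "\<bar>z\<bar> \<le> H" for y z
  proof (rule differentiable_bound[of "{-H..H}" g "\<lambda>s h. deriv g s * h"])
    show "(g has_derivative (\<lambda>h. deriv g x * h)) (at x within {-H..H})" for x
      using assms(1)[of x] has_field_derivative_imp_has_derivative has_derivative_at_withinI by blast
    show "onorm (\<lambda>h. deriv g x * h) \<le> L" if "x \<in> {-H..H}" for x
      by (rule onorm_bound) (use L that in \<open>auto simp: abs_mult intro!: mult_right_mono\<close>)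
  qed (use that in auto)
  then show ?thesis using that L by simp
qed

lemma C1_imp_lipschitz_first_arg:
  fixes g :: "'a::euclidean_space \<Rightarrow> real \<Rightarrow> 'b::real_normed_vector"
  assumes D_cont: "continuous_on UNIV D"
    and D: "\<And>z. ((\<lambda>(a,b). g a b) has_derivative blinfun_apply (D z)) (at z)"
  obtains L where "L \<ge> 0"
    "\<And>a b w. norm a \<le> R \<Longrightarrow> norm b \<le> R \<Longrightarrow> \<bar>w\<bar> \<le> U \<Longrightarrow> norm (g a w - g b w) \<le> L * norm (a - b)"
proof -
  have "compact (cball (0::'a) R \<times> cball (0::real) U)" by (intro compact_Times compact_cball)
  then obtain B where B: "B \<ge> 0" "\<And>z. z \<in> cball 0 R \<times> cball 0 U \<Longrightarrow> norm (D z) \<le> B"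
    using continuous_on_compact_norm_bound[of "cball 0 R \<times> cball 0 U" D] continuous_on_subset[OF D_cont]
    by blast
  have "norm (g a w - g b w) \<le> B * norm (a - b)" if ab: "norm a \<le> R" "norm b \<le> R" "\<bar>w\<bar> \<le> U" for a b w
  proof (rule differentiable_bound[of "cball 0 R" "\<lambda>a. g a w" "\<lambda>a h. D (a,w) (h,0)"])
    show "((\<lambda>a. g a w) has_derivative (\<lambda>h. D (x,w) (h,0))) (at x within cball 0 R)" for x
      using has_derivative_compose[OF has_derivative_Pair[OF has_derivative_ident has_derivative_const] D]
      by simp
    show "onorm (\<lambda>h. D (x,w) (h,0)) \<le> B" if "x \<in> cball 0 R" for x
    proof (rule onorm_bound[OF B(1)])
      fix h :: 'a
      have "norm (D (x,w) (h,0)) \<le> norm (D (x,w)) * norm (h, 0::real)" by (rule norm_blinfun)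
      also have "\<dots> \<le> B * norm h"
        using B(2)[of "(x,w)"] that ab by (auto simp: norm_Pair intro!: mult_right_mono)
      finally show "norm (D (x,w) (h,0)) \<le> B * norm h" .
    qed
  qed (use ab in auto)
  then show ?thesis using that B by blast
qed

lemma abs_derivative_le_if_increments_le:
  fixes F G :: "real \<Rightarrow> real"
  assumes F: "(F has_real_derivative d) (at x within S)" and G: "(G has_real_derivative e) (at x within S)"
    and nontrivial: "at x within S \<noteq> bot"
    and incr: "eventually (\<lambda>y. \<bar>F y - F x\<bar> \<le> B * \<bar>G y - G x\<bar>) (at x within S)"
  shows "\<bar>d\<bar> \<le> B * \<bar>e\<bar>"
proof (rule tendsto_le[OF _ _ _])
  show "\<not> trivial_limit (at x within S)" using nontrivial by simp
  show "((\<lambda>y. B * \<bar>(G y - G x) / (y - x)\<bar>) \<longlongrightarrow> B * \<bar>e\<bar>) (at x within S)"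
    using G unfolding has_field_derivative_iff by (intro tendsto_intros)
  show "((\<lambda>y. \<bar>(F y - F x) / (y - x)\<bar>) \<longlongrightarrow> \<bar>d\<bar>) (at x within S)"
    using F unfolding has_field_derivative_iff by (intro tendsto_intros)
  show "eventually (\<lambda>y. \<bar>(F y - F x) / (y - x)\<bar> \<le> B * \<bar>(G y - G x) / (y - x)\<bar>) (at x within S)"
    using incr by eventually_elim (simp add: abs_divide divide_right_mono)
qed

locale closed_loop_solution =
  fixes f :: "real^'n \<Rightarrow> real \<Rightarrow> real^'n" and v :: "real \<Rightarrow> real" and \<kappa> :: "real^'n \<Rightarrow> real"
    and X :: "real \<Rightarrow> real^'n" and u :: "real \<Rightarrow> real \<Rightarrow> real" and p :: "real \<Rightarrow> real \<Rightarrow> real^'n"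
    and M vl :: real
    and Df :: "(real^'n) \<times> real \<Rightarrow> ((real^'n) \<times> real) \<Rightarrow>\<^sub>L (real^'n)"
    and Dk :: "(real^'n) \<Rightarrow> (real^'n) \<Rightarrow>\<^sub>L real"
    and Du :: "real \<times> real \<Rightarrow> (real \<times> real) \<Rightarrow>\<^sub>L real"
  assumes Df_cont: "continuous_on UNIV Df"
    and Df_der: "\<And>z. ((\<lambda>(a,b). f a b) has_derivative blinfun_apply (Df z)) (at z)"
    and v_der: "\<And>s. (v has_real_derivative deriv v s) (at s)"
    and v'_cont: "continuous_on UNIV (deriv v)"
    and vl_pos: "vl > 0" and vl_le: "\<And>s. vl \<le> v s"
    and Dk_cont: "continuous_on UNIV Dk"
    and Dk_der: "\<And>z. (\<kappa> has_derivative blinfun_apply (Dk z)) (at z)"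
    and Du_cont: "continuous_on ({0..1} \<times> {0..}) Du"
    and Du_der: "\<And>z. z \<in> {0..1} \<times> {0..} \<Longrightarrow>
        ((\<lambda>(x,t). u x t) has_derivative blinfun_apply (Du z)) (at z within {0..1} \<times> {0..})"
    and X_der: "\<And>t. t \<ge> 0 \<Longrightarrow> (X has_vector_derivative f (X t) (u 0 t)) (at t within {0..})"
    and pde: "\<And>x t. x \<in> {0..1} \<Longrightarrow> t \<ge> 0 \<Longrightarrow> pt u x t = v (u x t) * px u x t"
    and bc: "\<And>t. t \<ge> 0 \<Longrightarrow> u 1 t = \<kappa> (p 1 t)"
    and p_cont: "\<And>t. t \<ge> 0 \<Longrightarrow> continuous_on {0..1} (\<lambda>x. p x t)"
    and p_int: "\<And>x t. x \<in> {0..1} \<Longrightarrow> t \<ge> 0 \<Longrightarrow>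
        p x t = X t + integral {0..x} (\<lambda>y. Gam v (u y t) (px u y t) y *\<^sub>R f (p y t) (u y t))"
    and feas: "\<And>x t. x \<in> {0..1} \<Longrightarrow> t \<ge> 0 \<Longrightarrow>
        - M < deriv v (u x t) * px u x t / v (u x t) \<and> deriv v (u x t) * px u x t / v (u x t) < 1"
    and M_pos: "M > 0"
begin

lemma v_pos: "v s > 0"
  using vl_pos vl_le[of s] by linarith

lemma v_nonzero [simp]: "v s \<noteq> 0"
  using v_pos[of s] by linarith

lemma v_continuous: "continuous_on UNIV v"
  using v_der DERIV_isCont by (blast intro: continuous_at_imp_continuous_on)

lemma continuous_on_v_compose: "continuous_on S g \<Longrightarrow> continuous_on S (\<lambda>s. v (g s))"
  using continuous_on_compose2[OF v_continuous] by auto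

lemma continuous_on_deriv_v_compose: "continuous_on S g \<Longrightarrow> continuous_on S (\<lambda>s. deriv v (g s))"
  using continuous_on_compose2[OF v'_cont] by auto

lemma f_continuous: "continuous_on UNIV (\<lambda>(a,b). f a b)"
  using Df_der has_derivative_continuous continuous_at_imp_continuous_on by blast

lemma continuous_on_f_compose:
  "continuous_on S A \<Longrightarrow> continuous_on S B \<Longrightarrow> continuous_on S (\<lambda>s. f (A s) (B s))"
  using continuous_on_compose2[OF f_continuous continuous_on_Pair, of S A B] by auto

lemma u_has_derivative_compose:
  assumes "(g has_derivative g') (at s within A)" "g ` A \<subseteq> {0..1} \<times> {0..}" "s \<in> A"
  shows "((\<lambda>s. (\<lambda>(x,t). u x t) (g s)) has_derivative (\<lambda>h. Du (g s) (g' h))) (at s within A)"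
  using has_derivative_in_compose2[of "{0..1} \<times> {0..}" "\<lambda>(x,t). u x t" "\<lambda>z. blinfun_apply (Du z)" g A s g']
    Du_der assms by auto

lemma u_has_x_derivative:
  assumes x: "x \<in> {0..1}" and t: "t \<ge> 0"
  shows "((\<lambda>y. u y t) has_vector_derivative Du (x,t) (1,0)) (at x within {0..1})"
proof -
  have "((\<lambda>y. (y,t)) has_derivative (\<lambda>h. (h,0))) (at x within {0..1})"
    by (rule has_derivative_Pair[OF has_derivative_ident has_derivative_const])
  from u_has_derivative_compose[OF this] x t
  have "((\<lambda>y. u y t) has_derivative (\<lambda>h. Du (x,t) (h,0))) (at x within {0..1})" by auto
  moreover have "(\<lambda>h. Du (x,t) (h,0)) = (\<lambda>h. h *\<^sub>R Du (x,t) (1,0))"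
    by (rule ext, subst blinfun.scaleR_right[symmetric]) simp
  ultimately show ?thesis unfolding has_vector_derivative_def by simp
qed

lemma u_has_t_derivative:
  assumes x: "x \<in> {0..1}" and t: "t \<ge> 0"
  shows "((\<lambda>s. u x s) has_vector_derivative Du (x,t) (0,1)) (at t within {0..})"
proof -
  have "((\<lambda>s. (x,s)) has_derivative (\<lambda>h. (0,h))) (at t within {0..})"
    by (rule has_derivative_Pair[OF has_derivative_const has_derivative_ident])
  moreover have "(\<lambda>s. (x,s)) ` {0..} \<subseteq> {0..1} \<times> {0..}" using x by auto
  ultimately have "((\<lambda>s. u x s) has_derivative (\<lambda>h. Du (x,t) (0,h))) (at t within {0..})"
    using u_has_derivative_compose[of "\<lambda>s. (x,s)" "\<lambda>h. (0,h)" t "{0..}"] t by simp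
  moreover have "(\<lambda>h. Du (x,t) (0,h)) = (\<lambda>h. h *\<^sub>R Du (x,t) (0,1))"
    by (rule ext, subst blinfun.scaleR_right[symmetric]) simp
  ultimately show ?thesis unfolding has_vector_derivative_def by simp
qed

lemma px_u_eq: "x \<in> {0..1} \<Longrightarrow> t \<ge> 0 \<Longrightarrow> px u x t = Du (x,t) (1,0)"
  unfolding px_def by (rule vector_derivative_within_closed_interval[OF _ _ u_has_x_derivative]) auto

lemma u_has_real_x_derivative:
  "x \<in> {0..1} \<Longrightarrow> t \<ge> 0 \<Longrightarrow> ((\<lambda>y. u y t) has_real_derivative px u x t) (at x within {0..1})"
  using u_has_x_derivative px_u_eq by (simp add: has_real_derivative_iff_has_vector_derivative)

lemma transport_equation: "x \<in> {0..1} \<Longrightarrow> t \<ge> 0 \<Longrightarrow> Du (x,t) (0,1) = v (u x t) * Du (x,t) (1,0)"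
  using pde px_u_eq vector_derivative_within[OF at_within_atLeast_nontrivial u_has_t_derivative]
  unfolding pt_def by simp

lemma u_continuous: "continuous_on ({0..1} \<times> {0..}) (\<lambda>(x,t). u x t)"
  using Du_der has_derivative_continuous continuous_on_eq_continuous_within by blast

lemma continuous_on_pair_const: "continuous_on S (\<lambda>y::real. (y, t::real))"
  by (intro continuous_on_Pair continuous_on_id continuous_on_const)

lemma u_continuous_in_x: "t \<ge> 0 \<Longrightarrow> continuous_on {0..1} (\<lambda>y. u y t)"
  using continuous_on_compose2[OF u_continuous continuous_on_pair_const[of "{0..1}" t]] by auto

lemma px_u_continuous: assumes t: "t \<ge> 0" shows "continuous_on {0..1} (\<lambda>y. px u y t)"
proof -
  have "continuous_on {0..1} (\<lambda>y. Du (y,t))"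
    using continuous_on_compose2[OF Du_cont continuous_on_pair_const[of "{0..1}" t]] t by auto
  then have "continuous_on {0..1} (\<lambda>y. Du (y,t) (1,0))"
    by (rule bounded_bilinear.continuous_on[OF bounded_bilinear_blinfun_apply _ continuous_on_const])
  then show ?thesis using px_u_eq t by (auto intro: continuous_on_cong[THEN iffD1])
qed

section \<open>Characteristics\<close>

lemma u_along_line_has_derivative:
  assumes line: "\<And>s. s \<in> {a..b} \<Longrightarrow> x0 - c * (s - t0) \<in> {0..1}" and a: "0 \<le> a" and s: "s \<in> {a..b}"
  shows "((\<lambda>s. u (x0 - c * (s - t0)) s) has_vector_derivative
      Du (x0 - c * (s - t0), s) (1,0) * (v (u (x0 - c * (s - t0)) s) - c)) (at s within {a..b})"
proof -
  define \<eta> where "\<eta> s = x0 - c * (s - t0)" for s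
  have "(\<eta> has_real_derivative - c) (at s within {a..b})"
    unfolding \<eta>_def by (auto intro!: derivative_eq_intros)
  then have "((\<lambda>s. (\<eta> s, s)) has_derivative (\<lambda>h. (- c * h, h))) (at s within {a..b})"
    using has_derivative_Pair[OF _ has_derivative_ident] has_field_derivative_imp_has_derivative
    by blast
  moreover have "(\<lambda>s. (\<eta> s, s)) ` {a..b} \<subseteq> {0..1} \<times> {0..}" using line a unfolding \<eta>_def by auto
  ultimately have "((\<lambda>s. u (\<eta> s) s) has_derivative (\<lambda>h. Du (\<eta> s, s) (- c * h, h))) (at s within {a..b})"
    using u_has_derivative_compose[of "\<lambda>s. (\<eta> s, s)" "\<lambda>h. (- c * h, h)" s "{a..b}"] s by simp
  moreover have "Du (\<eta> s, s) (- c * h, h) = h * (Du (\<eta> s, s) (1,0) * (v (u (\<eta> s) s) - c))" for h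
  proof -
    have "Du (\<eta> s, s) (- c * h, h) = h * (Du (\<eta> s, s) (0,1) - c * Du (\<eta> s, s) (1,0))"
      by (subst blinfun_apply_real_pair) (simp add: algebra_simps)
    also have "Du (\<eta> s, s) (0,1) = v (u (\<eta> s) s) * Du (\<eta> s, s) (1,0)"
      using transport_equation line[OF s] s a unfolding \<eta>_def by auto
    finally show ?thesis by (simp add: algebra_simps)
  qed
  ultimately show ?thesis unfolding has_vector_derivative_def \<eta>_def[symmetric] by simp
qed

text \<open>Uniqueness for the ODE satisfied along a characteristic: the difference \<open>u - c\<close> has a
  derivative bounded by a multiple of itself, because \<open>v\<close> is locally Lipschitz.\<close>
lemma u_constant_on_characteristic:
  assumes x0: "x0 \<in> {0..1}" and a: "0 \<le> a" "a \<le> t0" "t0 \<le> b"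
    and line: "\<And>s. s \<in> {a..b} \<Longrightarrow> x0 - v (u x0 t0) * (s - t0) \<in> {0..1}"
    and s: "s \<in> {a..b}"
  shows "u (x0 - v (u x0 t0) * (s - t0)) s = u x0 t0"
proof -
  define c where "c = u x0 t0"
  define \<eta> where "\<eta> s = x0 - v c * (s - t0)" for s
  have \<eta>: "\<eta> s \<in> {0..1}" if "s \<in> {a..b}" for s using line that unfolding \<eta>_def c_def .
  have gcont: "continuous_on {a..b} (\<lambda>s. (\<eta> s, s))" unfolding \<eta>_def by (intro continuous_intros)
  have gimg: "(\<lambda>s. (\<eta> s, s)) ` {a..b} \<subseteq> {0..1} \<times> {0..}" using \<eta> a by auto
  have "continuous_on {a..b} (\<lambda>s. Du (\<eta> s, s) (1,0))"
    by (rule bounded_bilinear.continuous_on[OF bounded_bilinear_blinfun_apply _ continuous_on_const])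
      (rule continuous_on_compose2[OF Du_cont gcont gimg])
  from continuous_on_compact_norm_bound[OF this compact_Icc]
  obtain P where P: "P \<ge> 0" "\<And>s. s \<in> {a..b} \<Longrightarrow> norm (Du (\<eta> s, s) (1,0)) \<le> P" by blast
  have "continuous_on {a..b} (\<lambda>s. u (\<eta> s) s)"
    using continuous_on_compose2[OF u_continuous gcont gimg] by simp
  from continuous_on_compact_norm_bound[OF this compact_Icc]
  obtain H where H: "\<And>s. s \<in> {a..b} \<Longrightarrow> norm (u (\<eta> s) s) \<le> H" by blast
  have t0: "t0 \<in> {a..b}" and \<eta>t0: "\<eta> t0 = x0" using a unfolding \<eta>_def by auto
  obtain L where L: "L \<ge> 0" "\<And>y z. \<bar>y\<bar> \<le> H \<Longrightarrow> \<bar>z\<bar> \<le> H \<Longrightarrow> \<bar>v y - v z\<bar> \<le> L * \<bar>y - z\<bar>"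
    using continuous_deriv_imp_lipschitz_on_interval[OF v_der v'_cont] by blast
  have "u (\<eta> s) s - c = 0"
  proof (rule linearly_bounded_derivative_zero_unique[OF _ _ t0 _ s])
    show "((\<lambda>s. u (\<eta> s) s - c) has_vector_derivative Du (\<eta> r, r) (1,0) * (v (u (\<eta> r) r) - v c))
        (at r within {a..b})" if "r \<in> {a..b}" for r
    proof -
      have "((\<lambda>s. u (\<eta> s) s) has_vector_derivative Du (\<eta> r, r) (1,0) * (v (u (\<eta> r) r) - v c))
          (at r within {a..b})"
        using u_along_line_has_derivative[OF line[folded c_def] a(1) that] unfolding \<eta>_def .
      from has_vector_derivative_diff[OF this has_vector_derivative_const[of c]] show ?thesis by simp
    qed
    show "norm (Du (\<eta> r, r) (1,0) * (v (u (\<eta> r) r) - v c)) \<le> (P * L) * norm (u (\<eta> r) r - c)"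
      if r: "r \<in> {a..b}" for r
    proof -
      have "\<bar>v (u (\<eta> r) r) - v c\<bar> \<le> L * \<bar>u (\<eta> r) r - c\<bar>"
        using L(2) H[OF r] H[OF t0] \<eta>t0 unfolding c_def by simp
      then show ?thesis using P(2)[OF r] P(1) L(1) by (simp add: abs_mult mult.assoc mult_mono)
    qed
  qed (use \<eta>t0 c_def in simp)
  then show ?thesis unfolding \<eta>_def c_def by simp
qed

lemma u_constant_back_along_characteristic:
  assumes x: "x \<in> {0..1}" and s0: "0 \<le> s0" "s0 \<le> t" and inside: "x + v (u x t) * (t - s0) \<le> 1"
  shows "u (x + v (u x t) * (t - s0)) s0 = u x t"
proof -
  have "u (x - v (u x t) * (s0 - t)) s0 = u x t"
  proof (rule u_constant_on_characteristic[OF x s0 order_refl])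
    show "x - v (u x t) * (s - t) \<in> {0..1}" if "s \<in> {s0..t}" for s
    proof -
      have "0 \<le> v (u x t) * (t - s)" "v (u x t) * (t - s) \<le> v (u x t) * (t - s0)"
        using v_pos[of "u x t"] that by (auto simp: zero_le_mult_iff mult_le_cancel_left_pos)
      then show ?thesis using x inside by (auto simp: algebra_simps)
    qed
  qed (use s0 in auto)
  then show ?thesis by (simp add: algebra_simps)
qed

section \<open>The prediction \<open>p\<close>\<close>

lemma Gam_continuous:
  assumes t: "t \<ge> 0" shows "continuous_on {0..1} (\<lambda>y. Gam v (u y t) (px u y t) y)"
  unfolding Gam_def using u_continuous_in_x[OF t] px_u_continuous[OF t] v_pos
  by (intro continuous_on_diff continuous_on_divide continuous_on_mult continuous_on_const
      continuous_on_id continuous_on_v_compose continuous_on_deriv_v_compose continuous_on_power) auto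

lemma p_integrand_continuous:
  assumes t: "t \<ge> 0"
  shows "continuous_on {0..1} (\<lambda>y. Gam v (u y t) (px u y t) y *\<^sub>R f (p y t) (u y t))"
  by (intro continuous_on_scaleR Gam_continuous continuous_on_f_compose p_cont u_continuous_in_x t)

lemma p_has_x_derivative:
  assumes x: "x \<in> {0..1}" and t: "t \<ge> 0"
  shows "((\<lambda>x. p x t) has_vector_derivative (Gam v (u x t) (px u x t) x *\<^sub>R f (p x t) (u x t)))
    (at x within {0..1})"
proof -
  have "((\<lambda>x. X t + integral {0..x} (\<lambda>y. Gam v (u y t) (px u y t) y *\<^sub>R f (p y t) (u y t)))
      has_vector_derivative (Gam v (u x t) (px u x t) x *\<^sub>R f (p x t) (u x t))) (at x within {0..1})"
    using has_vector_derivative_add[OF has_vector_derivative_const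
        integral_has_vector_derivative[OF p_integrand_continuous[OF t] x]]
    by simp
  then show ?thesis
    by (rule has_vector_derivative_transform_within[of _ _ _ _ 1]) (use x p_int t in auto)
qed

text \<open>The characteristic through \<open>(y,t)\<close> reaches the boundary \<open>x = 0\<close> at time \<open>t + y / v(u(y,t))\<close>.\<close>
lemma u_at_exit_time:
  assumes y: "y \<in> {0..1}" and t: "t \<ge> 0"
  shows "u 0 (t + y / v (u y t)) = u y t"
proof -
  define \<tau> where "\<tau> = t + y / v (u y t)"
  have \<tau>: "t \<le> \<tau>" "v (u y t) * (\<tau> - t) = y" unfolding \<tau>_def using v_pos[of "u y t"] y by auto
  have "u (y - v (u y t) * (\<tau> - t)) \<tau> = u y t"
  proof (rule u_constant_on_characteristic[OF y t order_refl \<tau>(1)])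
    show "y - v (u y t) * (s - t) \<in> {0..1}" if "s \<in> {t..\<tau>}" for s
    proof -
      have "0 \<le> v (u y t) * (s - t)" "v (u y t) * (s - t) \<le> y"
        using mult_left_mono[of "s - t" "\<tau> - t" "v (u y t)"] v_pos[of "u y t"] that \<tau> by auto
      then show ?thesis using y by auto
    qed
  qed (use \<tau> in auto)
  then show ?thesis using \<tau> unfolding \<tau>_def by simp
qed

lemma exit_time_has_x_derivative:
  assumes y: "y \<in> {0..1}" and t: "t \<ge> 0"
  shows "((\<lambda>y. t + y / v (u y t)) has_vector_derivative Gam v (u y t) (px u y t) y) (at y within {0..1})"
proof -
  have vd: "((\<lambda>y. v (u y t)) has_real_derivative deriv v (u y t) * px u y t) (at y within {0..1})"
    using DERIV_chain2[OF v_der u_has_real_x_derivative[OF y t]] by simp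
  have "((\<lambda>y. t + y / v (u y t)) has_real_derivative
      (1 * v (u y t) - y * (deriv v (u y t) * px u y t)) / (v (u y t) * v (u y t))) (at y within {0..1})"
    by (auto intro!: derivative_eq_intros vd)
  moreover have "(1 * v (u y t) - y * (deriv v (u y t) * px u y t)) / (v (u y t) * v (u y t))
      = Gam v (u y t) (px u y t) y"
    unfolding Gam_def using v_pos[of "u y t"] by (simp add: field_simps power2_eq_square)
  ultimately show ?thesis by (simp add: has_real_derivative_iff_has_vector_derivative)
qed

lemma X_at_exit_time_has_x_derivative:
  assumes y: "y \<in> {0..1}" and t: "t \<ge> 0"
  shows "((\<lambda>y. X (t + y / v (u y t))) has_vector_derivative
      Gam v (u y t) (px u y t) y *\<^sub>R f (X (t + y / v (u y t))) (u y t)) (at y within {0..1})"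
proof -
  define \<tau> where "\<tau> y = t + y / v (u y t)" for y
  have \<tau>: "\<tau> ` {0..1} \<subseteq> {0..}" using t unfolding \<tau>_def by (auto intro!: add_nonneg_nonneg divide_nonneg_pos v_pos)
  have "(X has_vector_derivative f (X (\<tau> y)) (u 0 (\<tau> y))) (at (\<tau> y) within \<tau> ` {0..1})"
    by (rule has_vector_derivative_within_subset[OF X_der \<tau>]) (use \<tau> y in \<open>auto simp: image_subset_iff\<close>)
  from vector_diff_chain_within[OF exit_time_has_x_derivative[OF y t, folded \<tau>_def] this]
  show ?thesis using u_at_exit_time[OF y t] unfolding \<tau>_def o_def by simp
qed

text \<open>\<open>p\<close> is the prediction of the state at the time the characteristic reaches \<open>x = 0\<close>: both sides
  solve the same ODE in \<open>x\<close> with initial value \<open>X t\<close>, so they agree by Gronwall's lemma.\<close>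
lemma p_eq_X_at_exit_time:
  assumes x: "x \<in> {0..1}" and t: "t \<ge> 0"
  shows "p x t = X (t + x / v (u x t))"
proof -
  define P where "P y = X (t + y / v (u y t))" for y
  define G where "G y = Gam v (u y t) (px u y t) y" for y
  have Pd: "(P has_vector_derivative G y *\<^sub>R f (P y) (u y t)) (at y within {0..1})" if "y \<in> {0..1}" for y
    using X_at_exit_time_has_x_derivative[OF that t] unfolding P_def G_def .
  have "continuous_on {0..1} P"
    using Pd continuous_on_eq_continuous_within has_vector_derivative_continuous by blast
  from continuous_on_compact_norm_bound[OF this compact_Icc]
  obtain R2 where R2: "\<And>y. y \<in> {0..1} \<Longrightarrow> norm (P y) \<le> R2" by blast
  from continuous_on_compact_norm_bound[OF p_cont[OF t] compact_Icc]
  obtain R1 where R1: "\<And>y. y \<in> {0..1} \<Longrightarrow> norm (p y t) \<le> R1" by blast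
  from continuous_on_compact_norm_bound[OF u_continuous_in_x[OF t] compact_Icc]
  obtain U where U: "\<And>y. y \<in> {0..1} \<Longrightarrow> norm (u y t) \<le> U" by blast
  from continuous_on_compact_norm_bound[OF Gam_continuous[OF t] compact_Icc]
  obtain Gb where Gb: "Gb \<ge> 0" "\<And>y. y \<in> {0..1} \<Longrightarrow> norm (G y) \<le> Gb" unfolding G_def by blast
  obtain L where L: "L \<ge> 0" "\<And>a b w. norm a \<le> max R1 R2 \<Longrightarrow> norm b \<le> max R1 R2 \<Longrightarrow> \<bar>w\<bar> \<le> U
      \<Longrightarrow> norm (f a w - f b w) \<le> L * norm (a - b)"
    using C1_imp_lipschitz_first_arg[OF Df_cont Df_der] by blast
  have "p x t - P x = 0"
  proof (rule linearly_bounded_derivative_zero_right[of 0 1 "\<lambda>y. p y t - P y" _ "Gb * L"])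
    show "((\<lambda>y. p y t - P y) has_vector_derivative G s *\<^sub>R (f (p s t) (u s t) - f (P s) (u s t)))
        (at s within {0..1})" if "s \<in> {0..1}" for s
      using has_vector_derivative_diff[OF p_has_x_derivative[OF that t] Pd[OF that]] unfolding G_def
      by (simp add: scaleR_diff_right)
    show "norm (G s *\<^sub>R (f (p s t) (u s t) - f (P s) (u s t))) \<le> Gb * L * norm (p s t - P s)"
      if s: "s \<in> {0..1}" for s
    proof -
      have "norm (f (p s t) (u s t) - f (P s) (u s t)) \<le> L * norm (p s t - P s)"
        using L(2) R1[OF s] R2[OF s] U[OF s] by simp
      then show ?thesis using Gb(2)[OF s] Gb(1) L(1) by (simp add: mult.assoc mult_mono)
    qed
    show "p 0 t - P 0 = 0" using p_int[of 0 t] t unfolding P_def by simp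
  qed (use x in auto)
  then show ?thesis unfolding P_def by simp
qed

section \<open>Transport of \<open>w\<close>\<close>

abbreviation w :: "real \<Rightarrow> real \<Rightarrow> real" where "w \<equiv> wfun \<kappa> u p"

definition wx :: "real \<Rightarrow> real \<Rightarrow> real" where
  "wx x t = px u x t - Dk (p x t) (Gam v (u x t) (px u x t) x *\<^sub>R f (p x t) (u x t))"

lemma w_boundary: "t \<ge> 0 \<Longrightarrow> w 1 t = 0"
  using bc unfolding wfun_def by simp

text \<open>Both points lie on one characteristic, so they share \<open>u\<close> and the exit time, hence \<open>p\<close>;
  characteristics entering through \<open>x = 1\<close> carry the boundary value \<open>w = 0\<close>.\<close>
lemma w_transport:
  assumes x: "x \<in> {0..1}" and t: "t \<ge> 0"
  shows "w x t = w (min (x + v (u x t) * t) 1) 0"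
proof -
  define c where "c = v (u x t)"
  have c: "c > 0" unfolding c_def using v_pos .
  have p_xt: "p x t = X (t + x / c)" using p_eq_X_at_exit_time[OF x t] unfolding c_def .
  show ?thesis
  proof (cases "x + c * t \<le> 1")
    case True
    define y where "y = x + c * t"
    have uy: "u y 0 = u x t"
      using u_constant_back_along_characteristic[OF x order_refl t] True unfolding y_def c_def by simp
    have y: "y \<in> {0..1}" using True x t c unfolding y_def by auto
    have "p y 0 = X (y / c)" using p_eq_X_at_exit_time[OF y, of 0] uy unfolding c_def by simp
    also have "y / c = t + x / c" unfolding y_def using c by (simp add: field_simps)
    finally have "w y 0 = w x t" using uy p_xt unfolding wfun_def by simp
    then show ?thesis using True unfolding y_def c_def by simp
  next
    case False
    define s1 where "s1 = t - (1 - x) / c"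
    have s1: "0 \<le> s1" "s1 \<le> t" "x + c * (t - s1) = 1"
      using False x c unfolding s1_def by (auto simp: field_simps)
    have u1: "u 1 s1 = u x t"
      using u_constant_back_along_characteristic[OF x s1(1,2)] s1(3) unfolding c_def by simp
    have "p 1 s1 = X (s1 + 1 / c)" using p_eq_X_at_exit_time[of 1 s1] s1 u1 unfolding c_def by simp
    also have "s1 + 1 / c = t + x / c" unfolding s1_def using c by (simp add: field_simps)
    finally have "w x t = w 1 s1" using u1 p_xt unfolding wfun_def by simp
    then show ?thesis using w_boundary s1 False unfolding c_def by simp
  qed
qed

lemma w_has_x_derivative:
  assumes x: "x \<in> {0..1}" and t: "t \<ge> 0"
  shows "((\<lambda>x. w x t) has_vector_derivative wx x t) (at x within {0..1})"
proof -
  define q where "q = Gam v (u x t) (px u x t) x *\<^sub>R f (p x t) (u x t)"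
  have "((\<lambda>x. p x t) has_derivative (\<lambda>h. h *\<^sub>R q)) (at x within {0..1})"
    using p_has_x_derivative[OF x t] unfolding has_vector_derivative_def q_def .
  from has_derivative_compose[OF this Dk_der]
  have "((\<lambda>x. \<kappa> (p x t)) has_vector_derivative Dk (p x t) q) (at x within {0..1})"
    unfolding has_vector_derivative_def by (simp add: blinfun.scaleR_right)
  moreover have "((\<lambda>y. u y t) has_vector_derivative px u x t) (at x within {0..1})"
    using u_has_x_derivative[OF x t] px_u_eq[OF x t] by simp
  ultimately show ?thesis
    using has_vector_derivative_diff unfolding wfun_def wx_def q_def by fastforce
qed

lemma w_has_real_x_derivative:
  "x \<in> {0..1} \<Longrightarrow> t \<ge> 0 \<Longrightarrow> ((\<lambda>x. w x t) has_real_derivative wx x t) (at x within {0..1})"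
  using w_has_x_derivative by (simp add: has_real_derivative_iff_has_vector_derivative)

lemma px_w_eq: "x \<in> {0..1} \<Longrightarrow> t \<ge> 0 \<Longrightarrow> px w x t = wx x t"
  unfolding px_def using vector_derivative_within_closed_interval[OF _ _ w_has_x_derivative] by simp

lemma w_continuous_in_x: "t \<ge> 0 \<Longrightarrow> continuous_on {0..1} (\<lambda>x. w x t)"
  using w_has_x_derivative continuous_on_eq_continuous_within has_vector_derivative_continuous by blast

lemma wx_continuous_in_x: assumes t: "t \<ge> 0" shows "continuous_on {0..1} (\<lambda>x. wx x t)"
proof -
  have "continuous_on {0..1} (\<lambda>x. Dk (p x t))"
    using continuous_on_compose2[OF Dk_cont p_cont[OF t]] by simp
  then have "continuous_on {0..1} (\<lambda>x. Dk (p x t) (Gam v (u x t) (px u x t) x *\<^sub>R f (p x t) (u x t)))"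
    by (rule bounded_bilinear.continuous_on[OF bounded_bilinear_blinfun_apply _ p_integrand_continuous[OF t]])
  then show ?thesis unfolding wx_def by (intro continuous_on_diff px_u_continuous t)
qed

definition sup_w0 :: real where "sup_w0 = (SUP x\<in>{0..1}. \<bar>w x 0\<bar>)"
definition sup_wx0 :: real where "sup_wx0 = (SUP x\<in>{0..1}. \<bar>wx x 0\<bar>)"

lemma abs_w0_le_sup_w0: "x \<in> {0..1} \<Longrightarrow> \<bar>w x 0\<bar> \<le> sup_w0"
  unfolding sup_w0_def by (rule cSUP_upper[OF _ bdd_above_abs_continuous_on_Icc[OF w_continuous_in_x]]) auto

lemma abs_wx0_le_sup_wx0: "x \<in> {0..1} \<Longrightarrow> \<bar>wx x 0\<bar> \<le> sup_wx0"
  unfolding sup_wx0_def by (rule cSUP_upper[OF _ bdd_above_abs_continuous_on_Icc[OF wx_continuous_in_x]]) auto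

lemma sup_w0_nonneg: "sup_w0 \<ge> 0"
  using abs_w0_le_sup_w0[of 0] by simp

lemma sup_wx0_nonneg: "sup_wx0 \<ge> 0"
  using abs_wx0_le_sup_wx0[of 0] by simp

lemma abs_w_le_sup_w0: assumes "x \<in> {0..1}" "t \<ge> 0" shows "\<bar>w x t\<bar> \<le> sup_w0"
  using w_transport[OF assms] abs_w0_le_sup_w0[of "min (x + v (u x t) * t) 1"] v_pos[of "u x t"] assms
  by simp

lemma nonneg_after_settling: "t \<ge> 2 / vl \<Longrightarrow> t \<ge> 0"
  using divide_pos_pos[of 2 vl] vl_pos by linarith

lemma characteristic_exits:
  assumes x: "x \<in> {0..1}" and t: "t \<ge> 2 / vl" shows "1 < x + v (u x t) * t"
proof -
  have "2 \<le> vl * t" using t vl_pos by (simp add: divide_le_eq mult.commute)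
  also have "\<dots> \<le> v (u x t) * t" using vl_le nonneg_after_settling[OF t] by (rule mult_right_mono)
  finally show ?thesis using x by simp
qed

lemma w_vanishes: assumes x: "x \<in> {0..1}" and t: "t \<ge> 2 / vl" shows "w x t = 0"
  using w_transport[OF x nonneg_after_settling[OF t]] characteristic_exits[OF x t] w_boundary[of 0]
  by simp

lemma w0_lipschitz:
  assumes "y1 \<in> {0..1}" "y2 \<in> {0..1}" shows "\<bar>w y1 0 - w y2 0\<bar> \<le> sup_wx0 * \<bar>y1 - y2\<bar>"
proof -
  have "norm (w y1 0 - w y2 0) \<le> sup_wx0 * norm (y1 - y2)"
  proof (rule differentiable_bound[of "{0..1}" "\<lambda>x. w x 0" "\<lambda>z h. h * wx z 0"])
    show "((\<lambda>x. w x 0) has_derivative (\<lambda>h. h * wx x 0)) (at x within {0..1})" if "x \<in> {0..1}" for x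
      using w_has_x_derivative[OF that order_refl] unfolding has_vector_derivative_def by simp
    show "onorm (\<lambda>h. h * wx x 0) \<le> sup_wx0" if "x \<in> {0..1}" for x
      by (rule onorm_bound[OF sup_wx0_nonneg])
        (use abs_wx0_le_sup_wx0[OF that] in \<open>auto simp: abs_mult mult.commute intro: mult_left_mono\<close>)
  qed (use assms in auto)
  then show ?thesis by simp
qed

text \<open>\<open>x + v(u(x,t)) t\<close> is the point of the initial line from which the characteristic through
  \<open>(x,t)\<close> emanates (when it is at most 1).\<close>
lemma characteristic_foot_has_x_derivative:
  assumes x: "x \<in> {0..1}" and t: "t \<ge> 0"
  shows "((\<lambda>x. x + v (u x t) * t) has_real_derivative (1 + deriv v (u x t) * px u x t * t))
    (at x within {0..1})"
  using DERIV_chain2[OF v_der u_has_real_x_derivative[OF x t]]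
  by (auto intro!: derivative_eq_intros)

lemma wx_vanishes_if_exited:
  assumes x: "x \<in> {0..1}" and t: "t \<ge> 0" and exited: "1 < x + v (u x t) * t"
  shows "wx x t = 0"
proof -
  have "\<bar>wx x t\<bar> \<le> 0 * \<bar>0\<bar>"
  proof (rule abs_derivative_le_if_increments_le[OF w_has_real_x_derivative[OF x t] DERIV_const
        at_within_Icc_nontrivial[OF x]])
    have "((\<lambda>x. x + v (u x t) * t) \<longlongrightarrow> x + v (u x t) * t) (at x within {0..1})"
      using characteristic_foot_has_x_derivative[OF x t] has_field_derivative_imp_has_derivative
        has_derivative_continuous continuous_within by blast
    from order_tendstoD(1)[OF this exited]
    have "eventually (\<lambda>y. 1 < y + v (u y t) * t) (at x within {0..1})" .
    moreover have "eventually (\<lambda>y. y \<in> {0..1}) (at x within {0..1})"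
      by (simp add: eventually_at_filter)
    ultimately show "eventually (\<lambda>y. \<bar>w y t - w x t\<bar> \<le> 0 * \<bar>0 - 0\<bar>) (at x within {0..1})"
    proof eventually_elim
      case (elim y)
      then show ?case using w_transport[OF elim(2) t] w_transport[OF x t] exited by simp
    qed
  qed
  then show ?thesis by simp
qed

lemma wx_vanishes: assumes x: "x \<in> {0..1}" and t: "t \<ge> 2 / vl" shows "wx x t = 0"
  using wx_vanishes_if_exited[OF x nonneg_after_settling[OF t] characteristic_exits[OF x t]] .

lemma characteristic_stretching_bound:
  assumes x: "x \<in> {0..1}" and t: "t \<ge> 0" and inside: "x + v (u x t) * t \<le> 1"
  shows "\<bar>1 + deriv v (u x t) * px u x t * t\<bar> \<le> 2 + M"
proof -
  define r where "r = deriv v (u x t) * px u x t / v (u x t)"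
  have r: "\<bar>r\<bar> < 1 + M" using feas[OF x t] M_pos unfolding r_def by (auto simp: abs_less_iff)
  have tv: "0 \<le> t * v (u x t)" "t * v (u x t) \<le> 1"
    using inside x t v_pos[of "u x t"] by (auto simp: mult.commute)
  define a where "a = t * v (u x t) * r"
  have "\<bar>a\<bar> = t * v (u x t) * \<bar>r\<bar>" unfolding a_def by (simp only: abs_mult[of "t * v (u x t)" r] abs_of_nonneg[OF tv(1)])
  then have "\<bar>a\<bar> \<le> \<bar>r\<bar>" using mult_right_mono[OF tv(2) abs_ge_zero[of r]] by simp
  moreover have "1 + deriv v (u x t) * px u x t * t = 1 + a" unfolding a_def r_def by simp
  ultimately show ?thesis using r by arith
qed

lemma abs_wx_le: assumes x: "x \<in> {0..1}" and t: "t \<ge> 0" shows "\<bar>wx x t\<bar> \<le> (2 + M) * sup_wx0"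
proof (cases "1 < x + v (u x t) * t")
  case True then show ?thesis using wx_vanishes_if_exited[OF x t] sup_wx0_nonneg M_pos by simp
next
  case False
  have "\<bar>wx x t\<bar> \<le> sup_wx0 * \<bar>1 + deriv v (u x t) * px u x t * t\<bar>"
  proof (rule abs_derivative_le_if_increments_le[OF w_has_real_x_derivative[OF x t]
        characteristic_foot_has_x_derivative[OF x t] at_within_Icc_nontrivial[OF x]])
    show "eventually (\<lambda>y. \<bar>w y t - w x t\<bar> \<le> sup_wx0 * \<bar>(y + v (u y t) * t) - (x + v (u x t) * t)\<bar>)
        (at x within {0..1})"
      unfolding eventually_at_filter
    proof (intro always_eventually allI impI)
      fix y :: real assume y: "y \<in> {0..1}"
      have "\<bar>w y t - w x t\<bar> = \<bar>w (min (y + v (u y t) * t) 1) 0 - w (min (x + v (u x t) * t) 1) 0\<bar>"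
        using w_transport[OF y t] w_transport[OF x t] by simp
      also have "\<dots> \<le> sup_wx0 * \<bar>min (y + v (u y t) * t) 1 - min (x + v (u x t) * t) 1\<bar>"
        by (rule w0_lipschitz) (use v_pos[of "u x t"] v_pos[of "u y t"] x y t in auto)
      also have "\<dots> \<le> sup_wx0 * \<bar>(y + v (u y t) * t) - (x + v (u x t) * t)\<bar>"
        by (rule mult_left_mono[OF _ sup_wx0_nonneg]) linarith
      finally show "\<bar>w y t - w x t\<bar> \<le> sup_wx0 * \<bar>(y + v (u y t) * t) - (x + v (u x t) * t)\<bar>" .
    qed
  qed
  also have "\<dots> \<le> sup_wx0 * (2 + M)"
    using characteristic_stretching_bound[OF x t] False by (intro mult_left_mono sup_wx0_nonneg) auto
  finally show ?thesis by (simp add: mult.commute)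
qed

lemma Omega_w_eq:
  "t \<ge> 0 \<Longrightarrow> Omega_w \<kappa> X u p t = norm (X t) + (SUP x\<in>{0..1}. \<bar>w x t\<bar>) + (SUP x\<in>{0..1}. \<bar>wx x t\<bar>)"
  unfolding Omega_w_def using px_w_eq by (auto intro!: SUP_cong)

lemma Omega_w_initial: "Omega_w \<kappa> X u p 0 = norm (X 0) + sup_w0 + sup_wx0"
  using Omega_w_eq[of 0] unfolding sup_w0_def sup_wx0_def by simp

lemma Omega_w_le:
  assumes t: "t \<ge> 0" shows "Omega_w \<kappa> X u p t \<le> norm (X t) + sup_w0 + (2 + M) * sup_wx0"
proof -
  have "(SUP x\<in>{0..1}. \<bar>w x t\<bar>) \<le> sup_w0"
    by (rule cSUP_least) (use abs_w_le_sup_w0 t in auto)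
  moreover have "(SUP x\<in>{0..1}. \<bar>wx x t\<bar>) \<le> (2 + M) * sup_wx0"
    by (rule cSUP_least) (use abs_wx_le t in auto)
  ultimately show ?thesis using Omega_w_eq[OF t] by simp
qed

lemma Omega_w_settled: "t \<ge> 2 / vl \<Longrightarrow> Omega_w \<kappa> X u p t = norm (X t)"
  using Omega_w_eq[OF nonneg_after_settling] w_vanishes wx_vanishes by simp

lemma X_has_derivative:
  "s \<ge> 0 \<Longrightarrow> (X has_vector_derivative f (X s) (\<kappa> (X s) + w 0 s)) (at s within {0..})"
  using X_der p_eq_X_at_exit_time[of 0 s] unfolding wfun_def by simp

lemma w0_continuous: "continuous_on {0..} (\<lambda>s. w 0 s)"
proof -
  have "continuous_on {0..} (\<lambda>s::real. (0::real, s))" by (intro continuous_intros)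
  then have "continuous_on {0..} (\<lambda>s. u 0 s)"
    using continuous_on_compose2[OF u_continuous] by fastforce
  moreover have "continuous_on {0..} (\<lambda>s. \<kappa> (X s))"
  proof (rule continuous_on_compose2[of UNIV \<kappa>])
    show "continuous_on UNIV \<kappa>"
      using Dk_der has_derivative_continuous continuous_at_imp_continuous_on by blast
    show "continuous_on {0..} X"
      using X_der continuous_on_eq_continuous_within has_vector_derivative_continuous
      by (metis atLeast_iff)
  qed simp
  ultimately have "continuous_on {0..} (\<lambda>s. u 0 s - \<kappa> (X s))" by (rule continuous_on_diff)
  then show ?thesis
    by (rule continuous_on_cong[THEN iffD1, rotated 2]) (auto simp: wfun_def p_eq_X_at_exit_time[of 0])
qed

context
  fixes \<beta> :: "real \<Rightarrow> real \<Rightarrow> real" and \<gamma> :: "real \<Rightarrow> real"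
  assumes \<beta>: "class_KL \<beta>" and \<gamma>: "class_K \<gamma>"
    and ISS_estimate: "\<And>(Xs :: real \<Rightarrow> real^'n) \<omega> t. continuous_on {0..} \<omega> \<Longrightarrow>
       (\<And>t. t \<ge> 0 \<Longrightarrow> (Xs has_vector_derivative f (Xs t) (\<kappa> (Xs t) + \<omega> t)) (at t within {0..})) \<Longrightarrow>
       t \<ge> 0 \<Longrightarrow> norm (Xs t) \<le> \<beta> (norm (Xs 0)) t + \<gamma> (SUP s\<in>{0..t}. \<bar>\<omega> s\<bar>)"
begin

lemma X_ISS_bound: assumes s: "s \<ge> 0" shows "norm (X s) \<le> \<beta> (norm (X 0)) s + \<gamma> sup_w0"
proof -
  have bdd: "bdd_above ((\<lambda>r. \<bar>w 0 r\<bar>) ` {0..s})"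
    by (rule bdd_aboveI2[of _ _ sup_w0]) (use abs_w_le_sup_w0 in auto)
  have "0 \<le> (SUP r\<in>{0..s}. \<bar>w 0 r\<bar>)"
    using cSUP_upper[OF _ bdd, of 0] s by (meson abs_ge_zero atLeastAtMost_iff order.trans order_refl)
  moreover have "(SUP r\<in>{0..s}. \<bar>w 0 r\<bar>) \<le> sup_w0"
    by (rule cSUP_least) (use abs_w_le_sup_w0 s in auto)
  ultimately have "\<gamma> (SUP r\<in>{0..s}. \<bar>w 0 r\<bar>) \<le> \<gamma> sup_w0" by (rule class_K_mono[OF \<gamma>])
  with ISS_estimate[OF w0_continuous X_has_derivative s] show ?thesis by simp
qed

text \<open>After the settling time the input \<open>w(0,\<cdot>)\<close> of the ISS system vanishes.\<close>
lemma X_after_settling: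
  assumes t: "t \<ge> 2 / vl" shows "norm (X t) \<le> \<beta> (norm (X (2 / vl))) (t - 2 / vl)"
proof -
  define T where "T = 2 / vl"
  have T: "T \<ge> 0" unfolding T_def using vl_pos by simp
  have "((\<lambda>s. X (s + T)) has_vector_derivative f (X (s + T)) (\<kappa> (X (s + T)) + 0)) (at s within {0..})"
    if s: "s \<ge> 0" for s
  proof -
    have "((\<lambda>s. s + T) has_vector_derivative 1) (at s within {0..})"
      by (auto intro!: derivative_eq_intros simp: has_real_derivative_iff_has_vector_derivative[symmetric])
    moreover have "(X has_vector_derivative f (X (s + T)) (\<kappa> (X (s + T)) + w 0 (s + T)))
        (at (s + T) within (\<lambda>s. s + T) ` {0..})"
      by (rule has_vector_derivative_within_subset[OF X_has_derivative]) (use s T in auto)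
    ultimately show ?thesis
      using vector_diff_chain_within w_vanishes[of 0 "s + T"] s unfolding T_def o_def by fastforce
  qed
  from ISS_estimate[of "\<lambda>_. 0", OF _ this, of "t - T"] t
  show ?thesis using \<gamma> unfolding T_def class_K_def by simp
qed

lemma Omega_w_KL_bound:
  assumes t: "t \<ge> 0"
  defines "r \<equiv> Omega_w \<kappa> X u p 0"
  shows "Omega_w \<kappa> X u p t \<le> \<beta> (\<beta> r 0 + \<gamma> r) (max (t - 2 / vl) 0)
      + (\<beta> r 0 + \<gamma> r + (3 + M) * r) * exp (2 / vl - t)"
proof -
  define T where "T = 2 / vl"
  define B where "B = \<beta> r 0 + \<gamma> r"
  have r: "norm (X 0) \<le> r" "sup_w0 \<le> r" "sup_wx0 \<le> r" "0 \<le> r"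
    using Omega_w_initial sup_w0_nonneg sup_wx0_nonneg unfolding r_def by auto
  have \<beta>0: "class_K (\<lambda>s. \<beta> s 0)" using class_KL_class_K[OF \<beta>] by simp
  have "\<beta> (norm (X 0)) s \<le> \<beta> r 0" if "s \<ge> 0" for s
    using class_KL_antimono[OF \<beta> norm_ge_zero[of "X 0"] order_refl that] class_K_mono[OF \<beta>0 norm_ge_zero r(1)]
    by linarith
  then have X_bound: "norm (X s) \<le> B" if "s \<ge> 0" for s
    using X_ISS_bound[OF that] class_K_mono[OF \<gamma> sup_w0_nonneg r(2)] that unfolding B_def by force
  have B: "B \<ge> 0" using class_K_nonneg[OF \<beta>0 r(4)] class_K_nonneg[OF \<gamma> r(4)] unfolding B_def by simp
  show ?thesis
  proof (cases "t < T")
    case True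
    have "(2 + M) * sup_wx0 \<le> (2 + M) * r" using r(3) M_pos by (simp add: mult_left_mono)
    then have "Omega_w \<kappa> X u p t \<le> B + (3 + M) * r"
      using Omega_w_le[OF t] X_bound[OF t] r by (simp add: algebra_simps)
    also have "\<dots> \<le> (B + (3 + M) * r) * exp (T - t)"
      using B r M_pos True mult_left_mono[of 1 "exp (T - t)" "B + (3 + M) * r"] by simp
    finally show ?thesis
      using class_KL_nonneg[OF \<beta> B, of "max (t - T) 0"] unfolding T_def B_def by simp
  next
    case False
    have "Omega_w \<kappa> X u p t \<le> \<beta> (norm (X T)) (t - T)"
      using Omega_w_settled X_after_settling False unfolding T_def by simp
    also have "\<dots> \<le> \<beta> B (t - T)"
      using class_K_mono[OF class_KL_class_K[OF \<beta>] norm_ge_zero X_bound] False T_def vl_pos by simp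
    moreover have "0 \<le> (B + (3 + M) * r) * exp (T - t)" using B r M_pos by simp
    ultimately show ?thesis using False unfolding T_def B_def by simp
  qed
qed

end

end

lemma closed_loop_solutionE:
  assumes f: "C1_fun2 f" and v: "C2_real v" "vl > 0" "\<And>s. vl \<le> v s" and \<kappa>: "C2_fun \<kappa>"
    and M: "M > 0" and sol: "closed_loop_sol f v \<kappa> X u p" and feas: "feasible M v u"
  obtains Df Dk Du where "closed_loop_solution f v \<kappa> X u p M vl Df Dk Du"
proof -
  obtain Df where Df: "continuous_on UNIV Df" "\<And>z. ((\<lambda>(a,b). f a b) has_derivative blinfun_apply (Df z)) (at z)"
    using f unfolding C1_fun2_def by blast
  obtain Dk D2 where Dk: "\<And>z. (\<kappa> has_derivative blinfun_apply (Dk z)) (at z)"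
      "\<And>z. (Dk has_derivative blinfun_apply (D2 z)) (at z)"
    using \<kappa> unfolding C2_fun_def by blast
  have Dk_cont: "continuous_on UNIV Dk"
    using Dk(2) has_derivative_continuous continuous_at_imp_continuous_on by blast
  have v_der: "\<And>s. (v has_real_derivative deriv v s) (at s)"
    using v(1) unfolding C2_real_def by (simp add: DERIV_deriv_iff_real_differentiable)
  have v'_cont: "continuous_on UNIV (deriv v)"
    using v(1) unfolding C2_real_def
    by (meson continuous_at_imp_continuous_on differentiable_imp_continuous_within)
  obtain Du where Du: "continuous_on ({0..1} \<times> {0..}) Du"
      "\<And>z. z \<in> {0..1} \<times> {0..} \<Longrightarrow>
        ((\<lambda>(x,t). u x t) has_derivative blinfun_apply (Du z)) (at z within {0..1} \<times> {0..})"
    using sol unfolding closed_loop_sol_def C1_on2_def by blast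
  have "closed_loop_solution f v \<kappa> X u p M vl Df Dk Du"
  proof
    show "\<And>t. t \<ge> 0 \<Longrightarrow> (X has_vector_derivative f (X t) (u 0 t)) (at t within {0..})"
      using sol unfolding closed_loop_sol_def by blast
    show "\<And>x t. x \<in> {0..1} \<Longrightarrow> t \<ge> 0 \<Longrightarrow> pt u x t = v (u x t) * px u x t"
      using sol unfolding closed_loop_sol_def by blast
    show "\<And>t. t \<ge> 0 \<Longrightarrow> u 1 t = \<kappa> (p 1 t)"
      using sol unfolding closed_loop_sol_def by blast
    show "\<And>t. t \<ge> 0 \<Longrightarrow> continuous_on {0..1} (\<lambda>x. p x t)"
      using sol unfolding closed_loop_sol_def by blast
    show "\<And>x t. x \<in> {0..1} \<Longrightarrow> t \<ge> 0 \<Longrightarrow>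
        p x t = X t + integral {0..x} (\<lambda>y. Gam v (u y t) (px u y t) y *\<^sub>R f (p y t) (u y t))"
      using sol unfolding closed_loop_sol_def by blast
    show "\<And>x t. x \<in> {0..1} \<Longrightarrow> t \<ge> 0 \<Longrightarrow>
        - M < deriv v (u x t) * px u x t / v (u x t) \<and> deriv v (u x t) * px u x t / v (u x t) < 1"
      using feas unfolding feasible_def by blast
  qed (use Df Dk(1) Dk_cont v_der v'_cont v Du M in auto)
  then show ?thesis by (rule that)
qed

theorem lemma2:
  fixes f :: "real^'n \<Rightarrow> real \<Rightarrow> real^'n" and v :: "real \<Rightarrow> real"
    and \<kappa> :: "real^'n \<Rightarrow> real" and M :: real
  assumes f_C1: "C1_fun2 f" and f00: "f 0 0 = 0"
    and A1_C2: "C2_real v" and A1_pos: "\<exists>vl>0. \<forall>s. vl \<le> v s"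
    and A2: "\<exists>(R :: real^'n \<Rightarrow> real) (DR :: (real^'n) \<Rightarrow> ((real^'n) \<Rightarrow>\<^sub>L real)) \<alpha>1 \<alpha>2 \<alpha>3.
               continuous_on UNIV DR \<and> (\<forall>X. (R has_derivative blinfun_apply (DR X)) (at X)) \<and>
               (\<forall>X. 0 \<le> R X) \<and>
               class_Kinf \<alpha>1 \<and> class_Kinf \<alpha>2 \<and> class_Kinf \<alpha>3 \<and>
               (\<forall>X. \<alpha>1 (norm X) \<le> R X \<and> R X \<le> \<alpha>2 (norm X)) \<and>
               (\<forall>X \<omega>. blinfun_apply (DR X) (f X \<omega>) \<le> R X + \<alpha>3 \<bar>\<omega>\<bar>)"
    and A3_C2: "C2_fun \<kappa>" and A3_0: "\<kappa> 0 = 0"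
    and A3_ISS: "ISS (\<lambda>X \<omega>. f X (\<kappa> X + \<omega>))"
    and M_pos: "M > 0"
  shows "\<exists>\<beta>w. class_KL \<beta>w \<and>
           (\<forall>X u p. closed_loop_sol f v \<kappa> X u p \<and> feasible M v u \<longrightarrow>
              (\<forall>t\<ge>0. Omega_w \<kappa> X u p t \<le> \<beta>w (Omega_w \<kappa> X u p 0) t))"
proof -
  obtain vl where vl: "vl > 0" "\<And>s. vl \<le> v s" using A1_pos by blast
  obtain \<beta> \<gamma> where \<beta>: "class_KL \<beta>" and \<gamma>: "class_K \<gamma>" and ISS_estimate:
    "\<And>(Xs :: real \<Rightarrow> real^'n) \<omega> t. continuous_on {0..} \<omega> \<Longrightarrow>
       (\<And>t. t \<ge> 0 \<Longrightarrow> (Xs has_vector_derivative f (Xs t) (\<kappa> (Xs t) + \<omega> t)) (at t within {0..})) \<Longrightarrow>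
       t \<ge> 0 \<Longrightarrow> norm (Xs t) \<le> \<beta> (norm (Xs 0)) t + \<gamma> (SUP s\<in>{0..t}. \<bar>\<omega> s\<bar>)"
    using ISS_E[OF A3_ISS] by blast
  define B where "B r = \<beta> r 0 + \<gamma> r" for r
  define \<beta>w where "\<beta>w r t = \<beta> (B r) (max (t - 2 / vl) 0) + (B r + (3 + M) * r) * exp (2 / vl - t)"
    for r t
  have B: "class_K B"
    unfolding B_def using class_K_add[OF class_KL_class_K[OF \<beta> order_refl] \<gamma>] .
  have "class_KL \<beta>w"
    unfolding \<beta>w_def using M_pos
    by (intro class_KL_add class_KL_delay[OF \<beta> B] class_KL_exp_decay class_K_add[OF B] class_K_linear)
      simp
  moreover have "Omega_w \<kappa> X u p t \<le> \<beta>w (Omega_w \<kappa> X u p 0) t"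
    if sol: "closed_loop_sol f v \<kappa> X u p" and feas: "feasible M v u" and t: "t \<ge> 0" for X u p t
  proof -
    obtain Df Dk Du where "closed_loop_solution f v \<kappa> X u p M vl Df Dk Du"
      using closed_loop_solutionE[OF f_C1 A1_C2 vl A3_C2 M_pos sol feas] .
    from closed_loop_solution.Omega_w_KL_bound[OF this \<beta> \<gamma> ISS_estimate t]
    show ?thesis unfolding \<beta>w_def B_def by blast
  qed
  ultimately show ?thesis by blast
qed

end
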